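(* Let $L$ be an even positive integer and $N\ge 1$ an integer. Consider the logarithmic Bethe equations $$\frac{1}{\pi}\arctan \lambda_k=\frac{I_k}{L}-\frac{1}{\pi L}\sum_{l=1}^N \arctan(\lambda_k-\lambda_l),\qquad k=1,\dots,N,$$ for unknowns $\lambda_1,\dots,\lambda_N$, where the Bethe numbers $I_k$ are integers if $N$ is odd and half-integers if $N$ is even. Then the solutions $(\lambda_1,\dots,\lambda_N)$ of these equations with $\lambda_k\neq\lambda_l$ for $k\neq l$ are all real, and they are characterized (in one-to-one correspondence) by the choice of $N$ distinct (half-)integers $I_1,\dots,I_N$ satisfying $$-\frac{L+N-1}{2}< I_k < \frac{L+N-1}{2}.$$
   Context: These are the logarithmic form of the Bethe equations $\left(\frac{\lambda_k-i}{\lambda_k+i}\right)^L=\prod_{l\neq k}\frac{\lambda_k-\lambda_l+i}{\lambda_k-\lambda_l-i}$ of the non-compact spin $s=-1$ Heisenberg chain; $\arctan$ denotes the principal branch. *)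

theory Defs
  imports "HOL-Analysis.Analysis"
begin

definition bethe_number_ok :: "nat \<Rightarrow> real \<Rightarrow> bool" where
  "bethe_number_ok N x \<longleftrightarrow> (if odd N then x \<in> \<int> else x - 1/2 \<in> \<int>)"

text \<open>Points where the principal complex arctan is defined (it is singular at +-i).\<close>
definition arctan_admissible :: "nat \<Rightarrow> (nat \<Rightarrow> complex) \<Rightarrow> bool" where
  "arctan_admissible N lam \<longleftrightarrow>
     (\<forall>k<N. lam k \<noteq> \<i> \<and> lam k \<noteq> - \<i> \<and>
        (\<forall>l<N. lam k - lam l \<noteq> \<i> \<and> lam k - lam l \<noteq> - \<i>))"

definition log_bethe :: "nat \<Rightarrow> nat \<Rightarrow> (nat \<Rightarrow> complex) \<Rightarrow> (nat \<Rightarrow> real) \<Rightarrow> bool" where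
  "log_bethe L N lam I \<longleftrightarrow>
     (\<forall>k<N. Arctan (lam k) / complex_of_real pi =
        complex_of_real (I k / real L)
        - (\<Sum>l<N. Arctan (lam k - lam l)) / complex_of_real (pi * real L))"

end

theory Submission
  imports Defs
begin

text \<open>
  At a rapidity of maximal (minimal) imaginary part, all terms of the imaginary part of its
  equation have the same sign, since \<open>Im (Arctan z)\<close> has the sign of \<open>Im z\<close>; hence all
  rapidities are real. For real rapidities the equations read
  \<open>Z\<^sub>k(x) = \<pi> I\<^sub>k\<close> with the counting function
  \<open>Z\<^sub>k(x) = L arctan x\<^sub>k + \<Sum>\<^sub>l arctan (x\<^sub>k - x\<^sub>l)\<close>, which is increasing in \<open>x\<^sub>k\<close> and
  nonincreasing in the other coordinates. The same maximum principle, applied to \<open>x - y\<close>, makes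
  solutions unique; \<open>Z\<^sub>k(x) < Z\<^sub>j(x)\<close> for \<open>x\<^sub>k < x\<^sub>j\<close> makes the \<open>I\<^sub>k\<close> distinct, and
  \<open>|Z\<^sub>k| < \<pi> (L + N - 1) / 2\<close> bounds them.

  Existence follows from the method of sub- and supersolutions: the largest subsolution below
  a supersolution solves the system. As \<open>M \<rightarrow> \<infinity>\<close>, \<open>Z\<^sub>k(M y)\<close> tends to
  \<open>\<pi>/2 (L sgn y\<^sub>k + \<Sum>\<^sub>l sgn (y\<^sub>k - y\<^sub>l))\<close>, so \<open>M (I \<mp> s)\<close> are a sub- and a supersolution for
  large \<open>M\<close> as soon as \<open>|2 I\<^sub>k - \<Sum>\<^sub>l sgn (I\<^sub>k - I\<^sub>l)| < L\<close>. This is where the (half-)integrality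
  enters: at most \<open>(L + N - 1) / 2 - I\<^sub>k - 1\<close> Bethe numbers lie above \<open>I\<^sub>k\<close>.
\<close>

definition counting_function :: "nat \<Rightarrow> nat \<Rightarrow> (nat \<Rightarrow> real) \<Rightarrow> nat \<Rightarrow> real" where
  "counting_function L N x k = real L * arctan (x k) + (\<Sum>l<N. arctan (x k - x l))"

section \<open>Reality of solutions\<close>

lemma maximum_principle:
  fixes y u :: "nat \<Rightarrow> real" and v :: "nat \<Rightarrow> nat \<Rightarrow> real"
  assumes balance: "\<And>k. k < N \<Longrightarrow> u k + (\<Sum>l<N. v k l) \<le> 0"
    and u_pos: "\<And>k. k < N \<Longrightarrow> y k > 0 \<Longrightarrow> u k > 0"
    and v_nonneg: "\<And>k l. k < N \<Longrightarrow> l < N \<Longrightarrow> y l \<le> y k \<Longrightarrow> v k l \<ge> 0"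
    and "k < N"
  shows "y k \<le> 0"
proof (rule ccontr)
  assume "\<not> y k \<le> 0"
  have "Max (y ` {..<N}) \<in> y ` {..<N}"
    using \<open>k < N\<close> by (intro Max_in) auto
  then obtain m where m: "m < N" "y m = Max (y ` {..<N})"
    by auto
  have max: "y l \<le> y m" if "l < N" for l
    using that m(2) by simp
  have "y m > 0"
    using max[OF \<open>k < N\<close>] \<open>\<not> y k \<le> 0\<close> by simp
  then have "u m > 0"
    using u_pos m(1) by blast
  moreover have "(\<Sum>l<N. v m l) \<ge> 0"
    using v_nonneg[OF m(1)] max by (intro sum_nonneg) auto
  ultimately show False
    using balance[OF m(1)] by linarith
qed

lemma sgn_Im_Arctan:
  assumes "z \<noteq> \<i>" "z \<noteq> - \<i>"
  shows "sgn (Im (Arctan z)) = sgn (Im z)"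
proof -
  define a where "a = cmod (1 - \<i> * z)"
  define b where "b = cmod (1 + \<i> * z)"
  have "1 - \<i> * z \<noteq> 0" "1 + \<i> * z \<noteq> 0"
    using assms by (auto simp: complex_eq_iff)
  then have "a > 0" "b > 0"
    by (simp_all add: a_def b_def)
  have "Im (Arctan z) = (ln a - ln b) / 2"
    using \<open>a > 0\<close> \<open>b > 0\<close> by (simp add: Arctan_def a_def b_def norm_divide ln_div)
  also have "sgn \<dots> = sgn (a - b)"
    using \<open>a > 0\<close> \<open>b > 0\<close> by (auto simp: sgn_if)
  also have "\<dots> = sgn ((a - b) * (a + b))"
    using \<open>a > 0\<close> \<open>b > 0\<close> by (simp add: sgn_mult)
  also have "(a - b) * (a + b) = 4 * Im z"
  proof -
    have "a\<^sup>2 = (1 + Im z)\<^sup>2 + (Re z)\<^sup>2" "b\<^sup>2 = (1 - Im z)\<^sup>2 + (Re z)\<^sup>2"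
      unfolding a_def b_def cmod_power2 by (simp_all add: power2_eq_square)
    then show ?thesis
      by (simp add: power2_eq_square algebra_simps)
  qed
  finally show ?thesis
    by (simp add: sgn_mult)
qed

lemma log_bethe_imp_real:
  assumes "L > 0" and adm: "arctan_admissible N lam" and eqs: "log_bethe L N lam I" and "k < N"
  shows "Im (lam k) = 0"
proof -
  define u where "u k = real L * Im (Arctan (lam k))" for k
  define v where "v k l = Im (Arctan (lam k - lam l))" for k l
  have balance: "u k + (\<Sum>l<N. v k l) = 0" if "k < N" for k
  proof -
    have "Im (Arctan (lam k) / pi) = Im (of_real (I k / real L) - (\<Sum>l<N. Arctan (lam k - lam l)) / (pi * real L))"
      using eqs that unfolding log_bethe_def by simp
    then show ?thesis
      using \<open>L > 0\<close> by (simp add: u_def v_def Im_sum field_simps)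
  qed
  have sgn_u: "sgn (u k) = sgn (Im (lam k))" if "k < N" for k
    using adm that \<open>L > 0\<close> sgn_Im_Arctan[of "lam k"]
    by (simp add: u_def sgn_mult arctan_admissible_def)
  have sgn_v: "sgn (v k l) = sgn (Im (lam k) - Im (lam l))" if "k < N" "l < N" for k l
    using adm that sgn_Im_Arctan[of "lam k - lam l"] by (simp add: v_def arctan_admissible_def)
  have "Im (lam k) \<le> 0"
  proof (rule maximum_principle[where u = u and v = v])
    show "u k + (\<Sum>l<N. v k l) \<le> 0" if "k < N" for k
      using balance[OF that] by simp
    show "u k > 0" if "k < N" "Im (lam k) > 0" for k
      using sgn_u[OF that(1)] that(2) by (metis sgn_greater)
    show "v k l \<ge> 0" if "k < N" "l < N" "Im (lam l) \<le> Im (lam k)" for k l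
      using sgn_v[OF that(1,2)] that(3) by (metis diff_ge_0_iff_ge zero_le_sgn_iff)
  qed fact
  moreover have "- Im (lam k) \<le> 0"
  proof (rule maximum_principle[where u = "\<lambda>k. - u k" and v = "\<lambda>k l. - v k l"])
    show "- u k + (\<Sum>l<N. - v k l) \<le> 0" if "k < N" for k
      using balance[OF that] by (simp add: sum_negf)
    show "- u k > 0" if "k < N" "- Im (lam k) > 0" for k
      using sgn_u[OF that(1)] that(2) by (metis neg_0_less_iff_less sgn_less)
    show "- v k l \<ge> 0" if "k < N" "l < N" "- Im (lam l) \<le> - Im (lam k)" for k l
      using sgn_v[OF that(1,2)] that(3) by (metis diff_le_0_iff_le neg_0_le_iff_le neg_le_iff_le sgn_le_0_iff)
  qed fact
  ultimately show ?thesis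
    by simp
qed

lemma log_bethe_real_iff:
  assumes "L > 0" and real: "\<And>k. k < N \<Longrightarrow> lam k = of_real (x k)"
  shows "log_bethe L N lam I \<longleftrightarrow> (\<forall>k<N. counting_function L N x k = pi * I k)"
proof -
  have "Arctan (lam k) / pi = of_real (I k / real L) - (\<Sum>l<N. Arctan (lam k - lam l)) / (pi * real L)
      \<longleftrightarrow> counting_function L N x k = pi * I k" if "k < N" for k
  proof -
    have "(\<Sum>l<N. Arctan (lam k - lam l)) = of_real (\<Sum>l<N. arctan (x k - x l))"
      using real that by (simp add: Arctan_of_real flip: of_real_diff)
    moreover have "Arctan (lam k) = of_real (arctan (x k))"
      using real[OF that] by (simp add: Arctan_of_real)
    ultimately have "Arctan (lam k) / pi = of_real (I k / real L) - (\<Sum>l<N. Arctan (lam k - lam l)) / (pi * real L)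
        \<longleftrightarrow> of_real (arctan (x k) / pi)
          = (of_real (I k / real L - (\<Sum>l<N. arctan (x k - x l)) / (pi * real L)) :: complex)"
      by simp
    also have "\<dots> \<longleftrightarrow> arctan (x k) / pi = I k / real L - (\<Sum>l<N. arctan (x k - x l)) / (pi * real L)"
      by (rule of_real_eq_iff)
    also have "\<dots> \<longleftrightarrow> counting_function L N x k = pi * I k"
      using \<open>L > 0\<close> by (simp add: counting_function_def field_simps)
    finally show ?thesis .
  qed
  then show ?thesis
    unfolding log_bethe_def by simp
qed

section \<open>The counting function\<close>

lemma arctan_diff_le:
  fixes a b :: real
  assumes "a \<le> b"
  shows "arctan b - arctan a \<le> b - a"
proof (cases "a = b")
  case False
  then obtain t where t: "arctan b - arctan a = (b - a) * inverse (1 + t\<^sup>2)"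
    using MVT2[of a b arctan "\<lambda>t. inverse (1 + t\<^sup>2)"] assms DERIV_arctan by force
  have "inverse (1 + t\<^sup>2) \<le> 1"
    by (simp add: inverse_le_1_iff)
  with assms show ?thesis
    unfolding t by (simp add: mult_left_le)
qed simp

lemma counting_function_one_sided_lipschitz:
  assumes le: "\<And>l. l < N \<Longrightarrow> x l \<le> y l" and "k < N"
  shows "counting_function L N y k - counting_function L N x k \<le> (real L + real N) * (y k - x k)"
proof -
  have xy: "x k \<le> y k"
    using le \<open>k < N\<close> .
  have "arctan (y k - y l) - arctan (x k - x l) \<le> y k - x k" if "l < N" for l
  proof -
    have "arctan (y k - y l) \<le> arctan (y k - x l)"
      using le[OF that] by (simp add: arctan_le_iff)
    moreover have "arctan (y k - x l) - arctan (x k - x l) \<le> y k - x k"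
      using arctan_diff_le[of "x k - x l" "y k - x l"] xy by simp
    ultimately show ?thesis
      by simp
  qed
  then have "(\<Sum>l<N. arctan (y k - y l)) - (\<Sum>l<N. arctan (x k - x l)) \<le> real N * (y k - x k)"
    using sum_mono[of "{..<N}" "\<lambda>l. arctan (y k - y l) - arctan (x k - x l)" "\<lambda>_. y k - x k"]
    by (simp add: sum_subtractf)
  moreover have "real L * (arctan (y k) - arctan (x k)) \<le> real L * (y k - x k)"
    using arctan_diff_le[OF xy] by (simp add: mult_left_mono)
  ultimately show ?thesis
    by (simp add: counting_function_def algebra_simps)
qed

lemma counting_function_strict_mono:
  assumes "L > 0" "x k < x j"
  shows "counting_function L N x k < counting_function L N x j"
proof -
  have "(\<Sum>l<N. arctan (x k - x l)) \<le> (\<Sum>l<N. arctan (x j - x l))"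
    using assms by (intro sum_mono) (simp add: arctan_le_iff)
  moreover have "real L * arctan (x k) < real L * arctan (x j)"
    using assms by (simp add: arctan_less_iff)
  ultimately show ?thesis
    by (simp add: counting_function_def)
qed

lemma counting_function_eq_iff:
  assumes "L > 0"
  shows "counting_function L N x k = counting_function L N x j \<longleftrightarrow> x k = x j"
proof
  assume "counting_function L N x k = counting_function L N x j"
  then show "x k = x j"
    using counting_function_strict_mono[OF assms, of x k j N] counting_function_strict_mono[OF assms, of x j k N]
    by (cases "x k" "x j" rule: linorder_cases) auto
qed (simp add: counting_function_def)

lemma abs_counting_function_less:
  assumes "L > 0" "k < N"
  shows "\<bar>counting_function L N x k\<bar> < pi * (real L + real N - 1) / 2"
proof -
  have bound: "\<bar>arctan t\<bar> < pi / 2" for t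
    using arctan_bounded[of t] by linarith
  have "(\<Sum>l<N. arctan (x k - x l)) = (\<Sum>l\<in>{..<N} - {k}. arctan (x k - x l))"
    using assms by (subst sum.remove[of _ k]) auto
  also have "\<bar>\<dots>\<bar> \<le> (\<Sum>l\<in>{..<N} - {k}. \<bar>arctan (x k - x l)\<bar>)"
    by (rule sum_abs)
  also have "\<dots> \<le> real (card ({..<N} - {k})) * (pi / 2)"
    using bound by (intro sum_bounded_above less_imp_le)
  also have "\<dots> = (real N - 1) * (pi / 2)"
    using assms by (simp add: of_nat_diff)
  finally have "\<bar>\<Sum>l<N. arctan (x k - x l)\<bar> \<le> (real N - 1) * (pi / 2)" .
  moreover have "\<bar>real L * arctan (x k)\<bar> < real L * (pi / 2)"
    using bound[of "x k"] assms by (simp add: abs_mult)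
  moreover have "real L * (pi / 2) + (real N - 1) * (pi / 2) = pi * (real L + real N - 1) / 2"
    by (simp add: field_simps)
  ultimately show ?thesis
    unfolding counting_function_def
    using abs_triangle_ineq[of "real L * arctan (x k)" "\<Sum>l<N. arctan (x k - x l)"] by linarith
qed

lemma counting_function_le_if_eq:
  assumes "L > 0" and eq: "\<And>k. k < N \<Longrightarrow> counting_function L N x k = counting_function L N y k"
    and "k < N"
  shows "x k \<le> y k"
proof -
  have "x k - y k \<le> 0"
  proof (rule maximum_principle[where u = "\<lambda>k. real L * (arctan (x k) - arctan (y k))"
        and v = "\<lambda>k l. arctan (x k - x l) - arctan (y k - y l)"])
    fix k assume "k < N"
    then show "real L * (arctan (x k) - arctan (y k)) + (\<Sum>l<N. arctan (x k - x l) - arctan (y k - y l)) \<le> 0"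
      using eq[of k] by (simp add: counting_function_def sum_subtractf algebra_simps)
  next
    fix k assume "x k - y k > 0"
    then show "real L * (arctan (x k) - arctan (y k)) > 0"
      using \<open>L > 0\<close> by (simp add: arctan_less_iff)
  next
    fix k l assume "x l - y l \<le> x k - y k"
    then show "arctan (x k - x l) - arctan (y k - y l) \<ge> 0"
      by (simp add: arctan_le_iff)
  qed (rule \<open>k < N\<close>)
  then show ?thesis
    by simp
qed

lemma tendsto_arctan_scaled: "((\<lambda>M. arctan (M * t)) \<longlongrightarrow> pi / 2 * sgn t) at_top"
proof -
  have pos: "((\<lambda>M. arctan (M * t)) \<longlongrightarrow> pi / 2) at_top" if "t > 0" for t :: real
    using that by (intro filterlim_compose[OF tendsto_arctan_at_top]
        filterlim_at_top_mult_tendsto_pos[OF tendsto_const]) (simp_all add: filterlim_ident)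
  consider "t > 0" | "t = 0" | "t < 0"
    by linarith
  then show ?thesis
  proof cases
    case 3
    have "((\<lambda>M. - arctan (M * - t)) \<longlongrightarrow> - (pi / 2)) at_top"
      using 3 by (intro tendsto_minus pos) simp
    then show ?thesis
      using 3 by (simp add: arctan_minus)
  qed (simp_all add: pos)
qed

lemma tendsto_counting_function_scaled:
  "((\<lambda>M. counting_function L N (\<lambda>l. M * y l) k)
     \<longlongrightarrow> pi / 2 * (real L * sgn (y k) + (\<Sum>l<N. sgn (y k - y l)))) at_top"
proof -
  have "((\<lambda>M. real L * arctan (M * y k) + (\<Sum>l<N. arctan (M * (y k - y l))))
     \<longlongrightarrow> real L * (pi / 2 * sgn (y k)) + (\<Sum>l<N. pi / 2 * sgn (y k - y l))) at_top"
    by (intro tendsto_intros tendsto_arctan_scaled)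
  then show ?thesis
    by (simp add: counting_function_def right_diff_distrib sum_distrib_left algebra_simps)
qed

section \<open>Sub- and supersolutions\<close>

locale quasi_monotone_system =
  fixes G :: "(nat \<Rightarrow> real) \<Rightarrow> nat \<Rightarrow> real" and N :: nat and K :: real
  assumes K_pos: "K > 0"
    and one_sided_lipschitz:
      "\<And>x y k. (\<And>l. l < N \<Longrightarrow> x l \<le> y l) \<Longrightarrow> k < N \<Longrightarrow> G y k - G x k \<le> K * (y k - x k)"
begin

lemma antitone_off_diagonal:
  assumes "\<And>l. l < N \<Longrightarrow> x l \<le> y l" "k < N" "x k = y k"
  shows "G y k \<le> G x k"
  using one_sided_lipschitz[of x y k] assms by simp

definition subsolutions :: "(nat \<Rightarrow> real) \<Rightarrow> (nat \<Rightarrow> real) \<Rightarrow> (nat \<Rightarrow> real) set" where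
  "subsolutions c hi = {x. \<forall>k<N. x k \<le> hi k \<and> G x k \<le> c k}"

definition greatest_subsolution :: "(nat \<Rightarrow> real) \<Rightarrow> (nat \<Rightarrow> real) \<Rightarrow> nat \<Rightarrow> real" where
  "greatest_subsolution c hi k = (if k < N then SUP x \<in> subsolutions c hi. x k else 0)"

lemma greatest_subsolution_upper:
  assumes "x \<in> subsolutions c hi" "k < N"
  shows "x k \<le> greatest_subsolution c hi k"
  using assms unfolding greatest_subsolution_def
  by (auto intro!: cSup_upper bdd_aboveI2[where M = "hi k"] simp: subsolutions_def)

lemma subsolutions_raise_coordinate:
  assumes "x \<in> subsolutions c hi" "k < N" "d \<ge> 0" "x k + d \<le> hi k" "G x k + K * d \<le> c k"
  shows "x(k := x k + d) \<in> subsolutions c hi"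
proof -
  define y where "y = x(k := x k + d)"
  have x_le_y: "x l \<le> y l" for l
    using \<open>d \<ge> 0\<close> by (simp add: y_def)
  have "G y j \<le> c j" if j: "j < N" for j
  proof (cases "j = k")
    case True
    have "G y k - G x k \<le> K * (y k - x k)"
      using x_le_y \<open>k < N\<close> by (intro one_sided_lipschitz)
    then show ?thesis
      using True assms(5) by (simp add: y_def)
  next
    case False
    then have "G y j \<le> G x j"
      using j x_le_y by (intro antitone_off_diagonal) (auto simp: y_def)
    then show ?thesis
      using assms(1) j by (auto simp: subsolutions_def)
  qed
  with assms(1,4) show ?thesis
    by (auto simp: subsolutions_def y_def)
qed

context
  fixes c hi lo :: "nat \<Rightarrow> real"
  assumes lo: "lo \<in> subsolutions c hi"
begin

private abbreviation "\<mu> \<equiv> greatest_subsolution c hi"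

lemma greatest_subsolution_le:
  assumes "k < N"
  shows "\<mu> k \<le> hi k"
  using assms lo unfolding greatest_subsolution_def
  by (auto intro!: cSup_least simp: subsolutions_def)

lemma greatest_subsolution_is_subsolution:
  assumes k: "k < N"
  shows "G \<mu> k \<le> c k"
proof (rule ccontr)
  assume "\<not> G \<mu> k \<le> c k"
  define e where "e = (G \<mu> k - c k) / K"
  have "e > 0"
    using \<open>\<not> G \<mu> k \<le> c k\<close> K_pos by (simp add: e_def)
  then have "\<mu> k - e < (SUP x \<in> subsolutions c hi. x k)"
    using k by (simp add: greatest_subsolution_def)
  then obtain x where x: "x \<in> subsolutions c hi" "\<mu> k - e < x k"
    using lo k by (subst (asm) less_cSUP_iff) (auto intro!: bdd_aboveI2[where M = "hi k"] simp: subsolutions_def)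
  have "G \<mu> k - G x k \<le> K * (\<mu> k - x k)"
    using x(1) k by (intro one_sided_lipschitz greatest_subsolution_upper)
  also have "\<dots> < K * e"
    using x(2) K_pos by simp
  also have "\<dots> = G \<mu> k - c k"
    using K_pos by (simp add: e_def)
  finally have "c k < G x k"
    by simp
  then show False
    using x(1) k by (auto simp: subsolutions_def)
qed

lemma greatest_subsolution_in_subsolutions: "\<mu> \<in> subsolutions c hi"
  using greatest_subsolution_le greatest_subsolution_is_subsolution by (simp add: subsolutions_def)

lemma greatest_subsolution_is_supersolution:
  assumes k: "k < N" and super: "\<And>j. j < N \<Longrightarrow> c j \<le> G hi j"
  shows "c k \<le> G \<mu> k"
proof (rule ccontr)
  assume "\<not> c k \<le> G \<mu> k"
  have "\<mu> k < hi k"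
  proof (rule ccontr)
    assume "\<not> \<mu> k < hi k"
    then have "G hi k \<le> G \<mu> k"
      using k greatest_subsolution_le by (intro antitone_off_diagonal) (auto intro: antisym)
    then show False
      using \<open>\<not> c k \<le> G \<mu> k\<close> super[OF k] by simp
  qed
  define d where "d = min (hi k - \<mu> k) ((c k - G \<mu> k) / K)"
  have "d > 0"
    using \<open>\<mu> k < hi k\<close> \<open>\<not> c k \<le> G \<mu> k\<close> K_pos by (simp add: d_def)
  moreover have "K * d \<le> K * ((c k - G \<mu> k) / K)"
    using K_pos by (intro mult_left_mono) (auto simp: d_def)
  ultimately have "\<mu>(k := \<mu> k + d) \<in> subsolutions c hi"
    using K_pos k by (intro subsolutions_raise_coordinate greatest_subsolution_in_subsolutions)
      (auto simp: d_def)
  then have "\<mu> k + d \<le> \<mu> k"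
    using greatest_subsolution_upper[OF _ k] by fastforce
  then show False
    using \<open>d > 0\<close> by simp
qed

end

theorem exists_solution_between:
  assumes "\<And>k. k < N \<Longrightarrow> lo k \<le> hi k" "\<And>k. k < N \<Longrightarrow> G lo k \<le> c k"
    and "\<And>k. k < N \<Longrightarrow> c k \<le> G hi k"
  shows "\<exists>x. (\<forall>k\<ge>N. x k = 0) \<and> (\<forall>k<N. G x k = c k)"
proof -
  have "lo \<in> subsolutions c hi"
    using assms by (simp add: subsolutions_def)
  then show ?thesis
    using assms(3) greatest_subsolution_is_subsolution greatest_subsolution_is_supersolution
    by (intro exI[of _ "greatest_subsolution c hi"]) (auto simp: greatest_subsolution_def intro: antisym)
qed

end

lemma exists_counting_function_solution:
  assumes "L > 0"
    and sgn_sum: "\<And>k. k < N \<Longrightarrow> \<bar>2 * c k - (\<Sum>l<N. sgn (c k - c l))\<bar> < real L"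
    and bounded: "\<And>k. k < N \<Longrightarrow> \<bar>c k\<bar> < s"
  shows "\<exists>x. (\<forall>k\<ge>N. x k = 0) \<and> (\<forall>k<N. counting_function L N x k = pi * c k)"
proof -
  interpret quasi_monotone_system "counting_function L N" N "real L + real N"
    using \<open>L > 0\<close> counting_function_one_sided_lipschitz by unfold_locales auto
  define lo where "lo M = (\<lambda>l. M * (c l - s))" for M
  define hi where "hi M = (\<lambda>l. M * (c l + s))" for M
  have "\<forall>\<^sub>F M in at_top. counting_function L N (lo M) k < pi * c k \<and> pi * c k < counting_function L N (hi M) k"
    if "k < N" for k
  proof -
    define \<sigma> where "\<sigma> = (\<Sum>l<N. sgn (c k - c l))"
    have "sgn (c k - s) = - 1" "sgn (c k + s) = 1"
      using bounded[OF that] by (auto simp: abs_less_iff)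
    then have "((\<lambda>M. counting_function L N (lo M) k) \<longlongrightarrow> pi / 2 * (- real L + \<sigma>)) at_top"
      and "((\<lambda>M. counting_function L N (hi M) k) \<longlongrightarrow> pi / 2 * (real L + \<sigma>)) at_top"
      using tendsto_counting_function_scaled[of L N "\<lambda>l. c l - s" k]
        tendsto_counting_function_scaled[of L N "\<lambda>l. c l + s" k]
      by (simp_all add: lo_def hi_def \<sigma>_def)
    moreover have "- real L + \<sigma> < 2 * c k" "2 * c k < real L + \<sigma>"
      using sgn_sum[OF that] by (auto simp: \<sigma>_def abs_less_iff)
    then have "pi / 2 * (- real L + \<sigma>) < pi / 2 * (2 * c k)" "pi / 2 * (2 * c k) < pi / 2 * (real L + \<sigma>)"
      by (simp_all only: mult_strict_left_mono pi_half_gt_zero)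
    moreover have "pi / 2 * (2 * c k) = pi * c k"
      by simp
    ultimately show ?thesis
      by (intro eventually_conj order_tendstoD) (assumption | linarith)+
  qed
  then have "\<forall>\<^sub>F M in at_top. M \<ge> 0 \<and> (\<forall>k\<in>{..<N}. counting_function L N (lo M) k < pi * c k
      \<and> pi * c k < counting_function L N (hi M) k)"
    by (intro eventually_conj eventually_ge_at_top eventually_ball_finite) auto
  then obtain M where "M \<ge> 0" and M: "\<And>k. k < N \<Longrightarrow> counting_function L N (lo M) k < pi * c k
      \<and> pi * c k < counting_function L N (hi M) k"
    unfolding eventually_at_top_linorder by auto
  have "lo M k \<le> hi M k" if "k < N" for k
    using \<open>M \<ge> 0\<close> bounded[OF that] by (simp add: lo_def hi_def mult_left_mono)
  then show ?thesis
    using M by (intro exists_solution_between[of "lo M" "hi M"]) (auto intro: less_imp_le)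
qed

section \<open>Bethe numbers\<close>

lemma card_greater_le:
  fixes I :: "nat \<Rightarrow> real"
  assumes inj: "inj_on I {..<N}" and coset: "\<And>l. l < N \<Longrightarrow> I l - a \<in> \<int>"
    and "B - a \<in> \<int>" and below: "\<And>l. l < N \<Longrightarrow> I l < B" and "k < N"
  shows "real (card {l\<in>{..<N}. I k < I l}) \<le> B - I k - 1"
proof -
  define T where "T = {l\<in>{..<N}. I k < I l}"
  have "B - I k = (B - a) - (I k - a)"
    by simp
  then obtain m where m: "B - I k = of_int m"
    using \<open>B - a \<in> \<int>\<close> coset[OF \<open>k < N\<close>] by (metis Ints_diff Ints_cases)
  have "I ` T \<subseteq> (\<lambda>j. I k + of_int j) ` {1..m - 1}"
  proof
    fix v assume "v \<in> I ` T"
    then obtain l where l: "l < N" "I k < I l" "v = I l"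
      by (auto simp: T_def)
    have "I l - I k = (I l - a) - (I k - a)"
      by simp
    then obtain j where j: "I l - I k = of_int j"
      using coset[OF l(1)] coset[OF \<open>k < N\<close>] by (metis Ints_diff Ints_cases)
    have "1 \<le> j" "j \<le> m - 1"
      using j m l(2) below[OF l(1)] by linarith+
    then show "v \<in> (\<lambda>j. I k + of_int j) ` {1..m - 1}"
      using j l(3) by (intro image_eqI[of _ _ j]) auto
  qed
  then have "card (I ` T) \<le> card {1..m - 1}"
    by (meson card_image_le card_mono finite_atLeastAtMost_int finite_imageI order_trans)
  moreover have "card (I ` T) = card T"
    using inj by (intro card_image) (auto simp: T_def intro: inj_on_subset)
  moreover have "m \<ge> 1"
    using m below[OF \<open>k < N\<close>] by linarith
  ultimately show ?thesis
    using m by (simp add: T_def)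
qed

lemma sum_sgn_diff_eq:
  fixes I :: "nat \<Rightarrow> real"
  assumes inj: "inj_on I {..<N}" and "k < N"
  shows "(\<Sum>l<N. sgn (I k - I l)) = real N - 1 - 2 * real (card {l\<in>{..<N}. I k < I l})"
proof -
  have "sgn (I k - I l) = 1 - of_bool (l = k) - 2 * of_bool (I k < I l)" if "l < N" for l
    using inj_onD[OF inj, of k l] that \<open>k < N\<close> by (auto simp: sgn_if)
  then have "(\<Sum>l<N. sgn (I k - I l)) = (\<Sum>l<N. 1 - of_bool (l = k) - 2 * of_bool (I k < I l))"
    by (intro sum.cong) auto
  also have "\<dots> = real N - 1 - 2 * real (card {l\<in>{..<N}. I k < I l})"
    using \<open>k < N\<close> by (simp add: sum_subtractf sum_distrib_left[symmetric] Int_def conj_commute Collect_conv_if)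
  finally show ?thesis .
qed

lemma two_mul_minus_sum_sgn_diff_le:
  fixes I :: "nat \<Rightarrow> real"
  assumes "inj_on I {..<N}" "\<And>l. l < N \<Longrightarrow> I l - a \<in> \<int>"
    and "B - a \<in> \<int>" "\<And>l. l < N \<Longrightarrow> I l < B" "k < N"
  shows "2 * I k - (\<Sum>l<N. sgn (I k - I l)) \<le> 2 * B - real N - 1"
  using card_greater_le[OF assms] sum_sgn_diff_eq[OF assms(1,5)] by simp

lemma bethe_number_ok_iff: "bethe_number_ok N x \<longleftrightarrow> x - (real N - 1) / 2 \<in> \<int>"
proof (cases "odd N")
  case True
  then obtain q where "N = 2 * q + 1"
    by (auto elim: oddE)
  then show ?thesis
    using True by (simp add: bethe_number_ok_def)
next
  case False
  then obtain q where "N = 2 * q"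
    by (auto elim: evenE)
  then have shift: "x - (real N - 1) / 2 = (x - 1 / 2) - of_int (int q - 1)"
    by (simp add: algebra_simps diff_divide_distrib)
  show ?thesis
    using False unfolding bethe_number_ok_def shift
    by (simp only: False if_False diff_in_Ints_iff_right[OF Ints_of_int])
qed

lemma bethe_numbers_sum_sgn_diff_bound:
  assumes "even L" "inj_on I {..<N}" "\<And>l. l < N \<Longrightarrow> bethe_number_ok N (I l)"
    and "\<And>l. l < N \<Longrightarrow> \<bar>I l\<bar> < (real L + real N - 1) / 2" "k < N"
  shows "\<bar>2 * I k - (\<Sum>l<N. sgn (I k - I l))\<bar> \<le> real L - 2"
proof -
  define a where "a = (real N - 1) / 2"
  define B where "B = (real L + real N - 1) / 2"
  obtain p where "L = 2 * p"
    using \<open>even L\<close> by (auto elim: evenE)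
  then have "B - a = of_nat p" "B - - a = of_nat (p + N) - 1"
    by (simp_all add: a_def B_def algebra_simps diff_divide_distrib add_divide_distrib)
  then have cosets: "B - a \<in> \<int>" "B - - a \<in> \<int>"
    by simp_all
  have coset: "I l - a \<in> \<int>" if "l < N" for l
    using assms(3)[OF that] by (simp add: bethe_number_ok_iff a_def)
  moreover have "- I l - - a \<in> \<int>" if "l < N" for l
    using coset[OF that] minus_in_Ints_iff[of "I l - a"] by simp
  moreover have "I l < B" "- I l < B" if "l < N" for l
    using assms(4)[OF that] by (simp_all add: B_def)
  moreover have "inj_on (\<lambda>l. - I l) {..<N}"
    using \<open>inj_on I {..<N}\<close> by (simp add: inj_on_def)
  ultimately have "2 * I k - (\<Sum>l<N. sgn (I k - I l)) \<le> 2 * B - real N - 1"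
    and "2 * - I k - (\<Sum>l<N. sgn (- I k - - I l)) \<le> 2 * B - real N - 1"
    using two_mul_minus_sum_sgn_diff_le[of I N a B k]
      two_mul_minus_sum_sgn_diff_le[of "\<lambda>l. - I l" N "- a" B k]
      \<open>inj_on I {..<N}\<close> cosets \<open>k < N\<close> by simp_all
  moreover have "(\<Sum>l<N. sgn (- I k - - I l)) = - (\<Sum>l<N. sgn (I k - I l))"
    using sgn_minus[of "I k - I l" for l] by (simp add: sum_negf[symmetric])
  moreover have "2 * B - real N - 1 = real L - 2"
    by (simp add: B_def field_simps)
  ultimately show ?thesis
    unfolding abs_le_iff by linarith
qed

section \<open>The Bethe equations\<close>

lemma log_bethe_counting_function_Re:
  assumes "L > 0" "arctan_admissible N lam" "log_bethe L N lam I" "k < N"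
  shows "counting_function L N (\<lambda>l. Re (lam l)) k = pi * I k"
  using log_bethe_real_iff[of L N lam "\<lambda>l. Re (lam l)" I] log_bethe_imp_real[OF assms(1-3)] assms
  by (simp add: complex_eq_iff)

lemma log_bethe_solution_properties:
  assumes "L > 0" "inj_on lam {..<N}" "arctan_admissible N lam" "log_bethe L N lam I"
  shows "(\<forall>k<N. lam k \<in> \<real>) \<and> inj_on I {..<N} \<and> (\<forall>k<N. \<bar>I k\<bar> < (real L + real N - 1) / 2)"
proof -
  define x where "x = (\<lambda>k. Re (lam k))"
  have real: "Im (lam k) = 0" if "k < N" for k
    using log_bethe_imp_real[OF assms(1,3,4) that] .
  have counting: "counting_function L N x k = pi * I k" if "k < N" for k
    using log_bethe_counting_function_Re[OF assms(1,3,4) that] by (simp add: x_def)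
  have "inj_on I {..<N}"
  proof (rule inj_onI)
    fix k j assume "k \<in> {..<N}" "j \<in> {..<N}" "I k = I j"
    then have "x k = x j"
      using counting counting_function_eq_iff[OF \<open>L > 0\<close>] by (metis lessThan_iff)
    then have "lam k = lam j"
      using \<open>k \<in> {..<N}\<close> \<open>j \<in> {..<N}\<close> real by (simp add: x_def complex_eq_iff)
    then show "k = j"
      using \<open>k \<in> {..<N}\<close> \<open>j \<in> {..<N}\<close> inj_onD[OF assms(2)] by blast
  qed
  moreover have "\<bar>I k\<bar> < (real L + real N - 1) / 2" if "k < N" for k
    using abs_counting_function_less[OF \<open>L > 0\<close> that, of x] counting[OF that]
    by (simp add: abs_mult)
  ultimately show ?thesis
    using real by (auto simp: complex_is_Real_iff)
qed

lemma log_bethe_solutions_eq: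
  assumes "L > 0" "\<forall>k\<ge>N. lam k = 0" "\<forall>k\<ge>N. lam' k = 0"
    and "arctan_admissible N lam" "arctan_admissible N lam'" "log_bethe L N lam I" "log_bethe L N lam' I"
  shows "lam = lam'"
proof
  fix k
  show "lam k = lam' k"
  proof (cases "k < N")
    case True
    have "counting_function L N (\<lambda>l. Re (lam l)) j = counting_function L N (\<lambda>l. Re (lam' l)) j"
      if "j < N" for j
      using log_bethe_counting_function_Re[OF \<open>L > 0\<close>] assms(4-7) that by simp
    then have "Re (lam k) = Re (lam' k)"
      using counting_function_le_if_eq[OF \<open>L > 0\<close>] True by (metis antisym)
    moreover have "Im (lam k) = Im (lam' k)"
      using log_bethe_imp_real[OF \<open>L > 0\<close>] assms(4-7) True by simp
    ultimately show ?thesis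
      by (simp add: complex_eq_iff)
  qed (use assms(2,3) in simp)
qed

lemma log_bethe_unique_solution:
  assumes "even L" "L > 0" "inj_on I {..<N}" "\<And>k. k < N \<Longrightarrow> bethe_number_ok N (I k)"
    and "\<And>k. k < N \<Longrightarrow> \<bar>I k\<bar> < (real L + real N - 1) / 2"
  shows "\<exists>!lam. (\<forall>k\<ge>N. lam k = 0) \<and> inj_on lam {..<N} \<and> arctan_admissible N lam \<and> log_bethe L N lam I"
proof -
  have "\<bar>2 * I k - (\<Sum>l<N. sgn (I k - I l))\<bar> < real L" if "k < N" for k
    using bethe_numbers_sum_sgn_diff_bound[OF assms(1,3,4,5) that] by simp
  then obtain x where x0: "\<forall>k\<ge>N. x k = 0" and x: "\<forall>k<N. counting_function L N x k = pi * I k"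
    using exists_counting_function_solution[OF \<open>L > 0\<close>] assms(5) by blast
  define lam where "lam k = complex_of_real (x k)" for k
  have "inj_on lam {..<N}"
  proof (rule inj_onI)
    fix k j assume "k \<in> {..<N}" "j \<in> {..<N}" "lam k = lam j"
    then have "I k = I j"
      using x counting_function_eq_iff[OF \<open>L > 0\<close>, of N x k j] by (simp add: lam_def)
    then show "k = j"
      using inj_onD[OF assms(3)] \<open>k \<in> {..<N}\<close> \<open>j \<in> {..<N}\<close> by blast
  qed
  moreover have "arctan_admissible N lam"
    by (simp add: arctan_admissible_def lam_def complex_eq_iff)
  moreover have "log_bethe L N lam I"
    using log_bethe_real_iff[OF \<open>L > 0\<close>] x by (simp add: lam_def)
  ultimately show ?thesis
    using x0 log_bethe_solutions_eq[OF \<open>L > 0\<close>] by (intro ex1I[of _ lam]) (auto simp: lam_def)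
qed

theorem proposition1:
  fixes L N :: nat
  assumes "even L" and "L > 0" and "N \<ge> 1"
  shows "(\<forall>lam I. inj_on lam {..<N} \<and> arctan_admissible N lam
            \<and> (\<forall>k<N. bethe_number_ok N (I k)) \<and> log_bethe L N lam I
          \<longrightarrow> (\<forall>k<N. lam k \<in> \<real>) \<and> inj_on I {..<N}
              \<and> (\<forall>k<N. \<bar>I k\<bar> < (real L + real N - 1) / 2))
       \<and> (\<forall>I. inj_on I {..<N}
            \<and> (\<forall>k<N. bethe_number_ok N (I k) \<and> \<bar>I k\<bar> < (real L + real N - 1) / 2)
          \<longrightarrow> (\<exists>!lam. (\<forall>k\<ge>N. lam k = 0) \<and> inj_on lam {..<N}
                   \<and> arctan_admissible N lam \<and> log_bethe L N lam I))"
proof (rule conjI; intro allI impI)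
  fix lam I
  assume "inj_on lam {..<N} \<and> arctan_admissible N lam \<and> (\<forall>k<N. bethe_number_ok N (I k)) \<and> log_bethe L N lam I"
  then show "(\<forall>k<N. lam k \<in> \<real>) \<and> inj_on I {..<N} \<and> (\<forall>k<N. \<bar>I k\<bar> < (real L + real N - 1) / 2)"
    using log_bethe_solution_properties[OF \<open>L > 0\<close>] by blast
next
  fix I :: "nat \<Rightarrow> real"
  assume "inj_on I {..<N} \<and> (\<forall>k<N. bethe_number_ok N (I k) \<and> \<bar>I k\<bar> < (real L + real N - 1) / 2)"
  then show "\<exists>!lam. (\<forall>k\<ge>N. lam k = 0) \<and> inj_on lam {..<N} \<and> arctan_admissible N lam \<and> log_bethe L N lam I"
    using log_bethe_unique_solution[OF assms(1,2)] by blast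
qed

end
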